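(* For every ordinal $\alpha$ and every closed $\mathcal L$-term $t$: $(\mathbb N,T^*_\alpha,P^*_\alpha)\not\models_{SK}\mathscr P(\mathrm Pt)\vee\mathscr P(\neg\mathrm Pt)$, where $(T^*_\alpha,P^*_\alpha)$ is the $\alpha$-th stage of the modified sequence described in the context.
   Context: Language. Let $\mathcal L_{\mathbb N}$ be the language of first-order Peano arithmetic and $\mathcal L=\mathcal L_{\mathbb N}\cup\{\mathrm T,\mathrm P\}$ with unary predicates $\mathrm T,\mathrm P$. $\mathcal L$-formulas are in Tait style: literals are $s=t$, $s\neq t$, $\mathrm Tt$, $\neg\mathrm Tt$, $\mathrm Pt$, $\neg\mathrm Pt$; formulas are built from literals by $\wedge,\vee,\forall,\exists$; negation of an arbitrary formula is defined by De Morgan dualities with $\neg\neg\varphi:=\varphi$. A standard Gödel numbering is fixed; $\#e$ is the code of $e$, $\ulcorner e\urcorner$ the numeral of $\#e$, $\mathrm{val}(t)$ the value of a closed term $t$, $\dot\neg$ the primitive recursive function with $\dot\neg(\#\varphi)=\#\neg\varphi$; $\mathrm T\varphi,\mathrm P\varphi$ abbreviate $\mathrm T\ulcorner\varphi\urcorner,\mathrm P\ulcorner\varphi\urcorner$. Semantics. A partial model is $(\mathbb N,T,P)$ with $\mathbb N$ the standard model and $T=(T^+,T^-)$, $P=(P^+,P^-)$ pairs of subsets of $\omega$. Strong Kleene satisfaction $\models_{SK}$: arithmetic literals evaluated in $\mathbb N$; $\mathrm Tt$ satisfied iff $\mathrm{val}(t)\in T^+$, $\neg\mathrm Tt$ iff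 $\mathrm{val}(t)\in T^-$, likewise for $\mathrm P$ with $P^\pm$; conjunction iff both, disjunction iff at least one, $\forall x\varphi(x)$ iff all numeral instances, $\exists x\varphi(x)$ iff some numeral instance. Base paradoxicality. $\mathrm{PA}[\mathrm{SK}]$ is the two-sided sequent calculus for Strong Kleene logic with identity in $\mathcal L$ (initial sequents $\varphi\Rightarrow\varphi$, cut, weakening, the rule from $\Gamma\Rightarrow\Delta,\varphi$ infer $\neg\varphi,\Gamma\Rightarrow\Delta$, usual rules for $\wedge,\vee,\forall,\exists$, reflexivity $\Rightarrow t=t$, replacement from $\Gamma\Rightarrow\Delta,\varphi(t)$ infer $\Gamma\Rightarrow\Delta,s\neq t,\varphi(s)$) plus the initial sequents of Peano arithmetic and the induction rule for all $\mathcal L$-formulas. A sentence $\varphi$ is base paradoxical iff $\mathrm{PA}[\mathrm{SK}]$ derives $\varphi\Leftrightarrow\neg\mathrm T\varphi$ and $\neg\varphi\Leftrightarrow\mathrm T\varphi$ ($\Leftrightarrow$ meaning both sequents). $B(x)$ is an $\mathcal L_{\mathbb N}$-formula defining in $\mathbb N$ the set of codes of base paradoxical sentences, and $\Pi(x):=B(x)\vee B(\dot\neg x)$. Paradoxicality clauses. Let $\mathscr P(x)$ be the $\mathcal L$-formula which is the disjunction of: (1) $x$ codes a sentence and $\Pi(x)$; (2) $x$ codes a sentence $\mathrm Tt$ ($t$ a closed term) and $\mathrm P(\mathrm{val}(t))$; (3) $x$ codes a sentence $\neg\mathrm Tt$ and $\mathrm P(\mathrm{val}(t))$; (4) $x$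 codes a sentence $\psi\wedge\theta$ and $(\mathrm P\psi\wedge\mathrm P\theta)\vee(\mathrm T\psi\wedge\mathrm P\theta)\vee(\mathrm T\theta\wedge\mathrm P\psi)$; (5) $x$ codes a sentence $\psi\vee\theta$ and $(\mathrm P\psi\wedge\mathrm P\theta)\vee(\neg\mathrm T\psi\wedge\mathrm P\theta)\vee(\neg\mathrm T\theta\wedge\mathrm P\psi)$; (6) $x$ codes a sentence $\forall v\psi$ and $\exists y\,\mathrm P\psi(\dot y)\wedge\forall y(\mathrm P\psi(\dot y)\vee\mathrm T\psi(\dot y))$; (7) $x$ codes a sentence $\exists v\psi$ and $\exists y\,\mathrm P\psi(\dot y)\wedge\forall y(\mathrm P\psi(\dot y)\vee\neg\mathrm T\psi(\dot y))$; here $\psi(\dot y)$ is the code of the result of substituting the numeral of $y$ for $v$. Write $\mathscr P(\varphi)$ for $\mathscr P(\ulcorner\varphi\urcorner)$. Modified sequence. Let $P_0^{*-}$ be the set of codes of the sentences $\mathrm P\ulcorner\varphi\urcorner$ for $\varphi$ an $\mathcal L$-formula. Define $\Gamma^*_{\mathscr{TP}}(T,P)=\big((\{\#\varphi:(\mathbb N,T,P)\models_{SK}\varphi\},\{\#\varphi:(\mathbb N,T,P)\models_{SK}\neg\varphi\}),(\{\#\varphi:(\mathbb N,T,P)\models_{SK}\mathscr P(\varphi)\},\{\#\varphi:(\mathbb N,T,P)\models_{SK}\varphi\vee\neg\varphi\}\cup P_0^{*-})\big)$, $\varphi$ ranging over $\mathcal L$-sentences. Define $(T^*_0,P^*_0)=((\emptyset,\emptyset),(\emptyset,P_0^{*-}))$,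 $(T^*_{\xi+1},P^*_{\xi+1})=\Gamma^*_{\mathscr{TP}}(T^*_\xi,P^*_\xi)$, and $(T^*_\lambda,P^*_\lambda)=\bigcup_{\xi<\lambda}(T^*_\xi,P^*_\xi)$ (componentwise union) for limit $\lambda$. *)

theory Defs
  imports Main "HOL-Library.Countable"
begin

section \<open>Syntax of L = L_N + {T, P} (Tait style, de Bruijn bound variables, named parameters)\<close>

datatype tm = TVar nat | TPar nat | TZero | TSuc tm | TPlus tm tm | TTimes tm tm

datatype fm =
    FEq tm tm | FNeq tm tm | FT tm | FNT tm | FP tm | FNP tm
  | FAnd fm fm | FOr fm fm | FAll fm | FEx fm

instance tm :: countable by countable_datatype
instance fm :: countable by countable_datatype

fun neg :: "fm \<Rightarrow> fm" where
  "neg (FEq s t) = FNeq s t"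
| "neg (FNeq s t) = FEq s t"
| "neg (FT t) = FNT t"
| "neg (FNT t) = FT t"
| "neg (FP t) = FNP t"
| "neg (FNP t) = FP t"
| "neg (FAnd a b) = FOr (neg a) (neg b)"
| "neg (FOr a b) = FAnd (neg a) (neg b)"
| "neg (FAll a) = FEx (neg a)"
| "neg (FEx a) = FAll (neg a)"

fun liftt :: "tm \<Rightarrow> tm" where
  "liftt (TVar i) = TVar (Suc i)"
| "liftt (TPar a) = TPar a"
| "liftt TZero = TZero"
| "liftt (TSuc t) = TSuc (liftt t)"
| "liftt (TPlus t u) = TPlus (liftt t) (liftt u)"
| "liftt (TTimes t u) = TTimes (liftt t) (liftt u)"

fun substt :: "nat \<Rightarrow> tm \<Rightarrow> tm \<Rightarrow> tm" where
  "substt k s (TVar i) = (if i < k then TVar i else if i = k then s else TVar (i - 1))"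
| "substt k s (TPar a) = TPar a"
| "substt k s TZero = TZero"
| "substt k s (TSuc t) = TSuc (substt k s t)"
| "substt k s (TPlus t u) = TPlus (substt k s t) (substt k s u)"
| "substt k s (TTimes t u) = TTimes (substt k s t) (substt k s u)"

fun substf :: "nat \<Rightarrow> tm \<Rightarrow> fm \<Rightarrow> fm" where
  "substf k s (FEq t u) = FEq (substt k s t) (substt k s u)"
| "substf k s (FNeq t u) = FNeq (substt k s t) (substt k s u)"
| "substf k s (FT t) = FT (substt k s t)"
| "substf k s (FNT t) = FNT (substt k s t)"
| "substf k s (FP t) = FP (substt k s t)"
| "substf k s (FNP t) = FNP (substt k s t)"
| "substf k s (FAnd a b) = FAnd (substf k s a) (substf k s b)"
| "substf k s (FOr a b) = FOr (substf k s a) (substf k s b)"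
| "substf k s (FAll a) = FAll (substf (Suc k) (liftt s) a)"
| "substf k s (FEx a) = FEx (substf (Suc k) (liftt s) a)"

definition inst :: "fm \<Rightarrow> tm \<Rightarrow> fm" where
  "inst phi t = substf 0 t phi"

fun paramst :: "tm \<Rightarrow> nat set" where
  "paramst (TVar i) = {}"
| "paramst (TPar a) = {a}"
| "paramst TZero = {}"
| "paramst (TSuc t) = paramst t"
| "paramst (TPlus t u) = paramst t \<union> paramst u"
| "paramst (TTimes t u) = paramst t \<union> paramst u"

fun paramsf :: "fm \<Rightarrow> nat set" where
  "paramsf (FEq t u) = paramst t \<union> paramst u"
| "paramsf (FNeq t u) = paramst t \<union> paramst u"
| "paramsf (FT t) = paramst t"
| "paramsf (FNT t) = paramst t"
| "paramsf (FP t) = paramst t"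
| "paramsf (FNP t) = paramst t"
| "paramsf (FAnd a b) = paramsf a \<union> paramsf b"
| "paramsf (FOr a b) = paramsf a \<union> paramsf b"
| "paramsf (FAll a) = paramsf a"
| "paramsf (FEx a) = paramsf a"

definition paramsl :: "fm list \<Rightarrow> nat set" where
  "paramsl G = (\<Union>phi \<in> set G. paramsf phi)"

fun varst :: "tm \<Rightarrow> nat set" where
  "varst (TVar i) = {i}"
| "varst (TPar a) = {}"
| "varst TZero = {}"
| "varst (TSuc t) = varst t"
| "varst (TPlus t u) = varst t \<union> varst u"
| "varst (TTimes t u) = varst t \<union> varst u"

fun boundedf :: "nat \<Rightarrow> fm \<Rightarrow> bool" where
  "boundedf k (FEq t u) = (\<forall>i \<in> varst t \<union> varst u. i < k)"
| "boundedf k (FNeq t u) = (\<forall>i \<in> varst t \<union> varst u. i < k)"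
| "boundedf k (FT t) = (\<forall>i \<in> varst t. i < k)"
| "boundedf k (FNT t) = (\<forall>i \<in> varst t. i < k)"
| "boundedf k (FP t) = (\<forall>i \<in> varst t. i < k)"
| "boundedf k (FNP t) = (\<forall>i \<in> varst t. i < k)"
| "boundedf k (FAnd a b) = (boundedf k a \<and> boundedf k b)"
| "boundedf k (FOr a b) = (boundedf k a \<and> boundedf k b)"
| "boundedf k (FAll a) = boundedf (Suc k) a"
| "boundedf k (FEx a) = boundedf (Suc k) a"

definition closed_tm :: "tm \<Rightarrow> bool" where
  "closed_tm t \<longleftrightarrow> varst t = {} \<and> paramst t = {}"

definition sentence :: "fm \<Rightarrow> bool" where
  "sentence phi \<longleftrightarrow> boundedf 0 phi \<and> paramsf phi = {}"

definition code :: "fm \<Rightarrow> nat" where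
  "code phi = to_nat phi"

fun num :: "nat \<Rightarrow> tm" where
  "num 0 = TZero"
| "num (Suc n) = TSuc (num n)"

definition quote :: "fm \<Rightarrow> tm" where
  "quote phi = num (code phi)"

text \<open>Value of a (closed) term in the standard model (open terms get an arbitrary value).\<close>
fun val :: "tm \<Rightarrow> nat" where
  "val (TVar i) = 0"
| "val (TPar a) = 0"
| "val TZero = 0"
| "val (TSuc t) = Suc (val t)"
| "val (TPlus t u) = val t + val u"
| "val (TTimes t u) = val t * val u"

definition dneg :: "nat \<Rightarrow> nat" where
  "dneg n = (if \<exists>phi. code phi = n then code (neg (from_nat n)) else n)"

section \<open>Strong Kleene satisfaction in partial models (N, T, P)\<close>

type_synonym pred = "nat set \<times> nat set"   (* (extension, anti-extension) *)

fun rank :: "fm \<Rightarrow> nat" where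
  "rank (FAnd a b) = Suc (rank a + rank b)"
| "rank (FOr a b) = Suc (rank a + rank b)"
| "rank (FAll a) = Suc (rank a)"
| "rank (FEx a) = Suc (rank a)"
| "rank _ = 0"

lemma rank_substf [simp]: "rank (substf k s phi) = rank phi"
  by (induction phi arbitrary: k s) auto

lemma rank_inst [simp]: "rank (inst phi t) = rank phi"
  by (simp add: inst_def)

function sk :: "pred \<Rightarrow> pred \<Rightarrow> fm \<Rightarrow> bool" where
  "sk T P (FEq s t) = (val s = val t)"
| "sk T P (FNeq s t) = (val s \<noteq> val t)"
| "sk T P (FT t) = (val t \<in> fst T)"
| "sk T P (FNT t) = (val t \<in> snd T)"
| "sk T P (FP t) = (val t \<in> fst P)"
| "sk T P (FNP t) = (val t \<in> snd P)"
| "sk T P (FAnd a b) = (sk T P a \<and> sk T P b)"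
| "sk T P (FOr a b) = (sk T P a \<or> sk T P b)"
| "sk T P (FAll a) = (\<forall>n. sk T P (inst a (num n)))"
| "sk T P (FEx a) = (\<exists>n. sk T P (inst a (num n)))"
  by pat_completeness auto
termination
  by (relation "measure (\<lambda>(T, P, phi). rank phi)") auto

section \<open>The sequent calculus PA[SK]\<close>

inductive prv :: "fm list \<Rightarrow> fm list \<Rightarrow> bool" where
  Ax: "prv [phi] [phi]"
| Cut: "prv G (D @ [phi]) \<Longrightarrow> prv (phi # G) D \<Longrightarrow> prv G D"
| Weak: "prv G D \<Longrightarrow> set G \<subseteq> set G' \<Longrightarrow> set D \<subseteq> set D' \<Longrightarrow> prv G' D'"
| NegL: "prv G (D @ [phi]) \<Longrightarrow> prv (neg phi # G) D"
| AndL: "prv (phi # psi # G) D \<Longrightarrow> prv (FAnd phi psi # G) D"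
| AndR: "prv G (D @ [phi]) \<Longrightarrow> prv G (D @ [psi]) \<Longrightarrow> prv G (D @ [FAnd phi psi])"
| OrL: "prv (phi # G) D \<Longrightarrow> prv (psi # G) D \<Longrightarrow> prv (FOr phi psi # G) D"
| OrR: "prv G (D @ [phi, psi]) \<Longrightarrow> prv G (D @ [FOr phi psi])"
| AllL: "prv (inst phi t # G) D \<Longrightarrow> prv (FAll phi # G) D"
| AllR: "prv G (D @ [inst phi (TPar a)]) \<Longrightarrow> a \<notin> paramsl G \<union> paramsl D \<union> paramsf phi
         \<Longrightarrow> prv G (D @ [FAll phi])"
| ExL: "prv (inst phi (TPar a) # G) D \<Longrightarrow> a \<notin> paramsl G \<union> paramsl D \<union> paramsf phi
         \<Longrightarrow> prv (FEx phi # G) D"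
| ExR: "prv G (D @ [inst phi t]) \<Longrightarrow> prv G (D @ [FEx phi])"
| Refl: "prv [] [FEq t t]"
| Repl: "prv G (D @ [inst phi t]) \<Longrightarrow> prv G (D @ [FNeq s t, inst phi s])"
| PA_EM: "prv [] [FEq s t, FNeq s t]"
| PA_Suc0: "prv [] [FNeq (TSuc s) TZero]"
| PA_SucInj: "prv [] [FNeq (TSuc s) (TSuc t), FEq s t]"
| PA_Plus0: "prv [] [FEq (TPlus s TZero) s]"
| PA_PlusS: "prv [] [FEq (TPlus s (TSuc t)) (TSuc (TPlus s t))]"
| PA_Times0: "prv [] [FEq (TTimes s TZero) TZero]"
| PA_TimesS: "prv [] [FEq (TTimes s (TSuc t)) (TPlus (TTimes s t) s)]"
| Ind: "prv (inst phi (TPar a) # G) (D @ [inst phi (TSuc (TPar a))])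
        \<Longrightarrow> a \<notin> paramsl G \<union> paramsl D \<union> paramsf phi
        \<Longrightarrow> prv (inst phi TZero # G) (D @ [inst phi t])"

definition base_paradoxical :: "fm \<Rightarrow> bool" where
  "base_paradoxical phi \<longleftrightarrow> sentence phi
     \<and> prv [phi] [neg (FT (quote phi))] \<and> prv [neg (FT (quote phi))] [phi]
     \<and> prv [neg phi] [FT (quote phi)] \<and> prv [FT (quote phi)] [neg phi]"

definition Bset :: "nat set" where
  "Bset = {code phi | phi. base_paradoxical phi}"

definition Pi :: "nat \<Rightarrow> bool" where
  "Pi n \<longleftrightarrow> n \<in> Bset \<or> dneg n \<in> Bset"

section \<open>SK-satisfaction of the paradoxicality formula script-P(numeral n) in (N,T,P)\<close>

definition Pscr :: "pred \<Rightarrow> pred \<Rightarrow> nat \<Rightarrow> bool" where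
  "Pscr T P n \<longleftrightarrow>
     ((\<exists>phi. sentence phi \<and> n = code phi) \<and> Pi n)
   \<or> (\<exists>t. closed_tm t \<and> n = code (FT t) \<and> val t \<in> fst P)
   \<or> (\<exists>t. closed_tm t \<and> n = code (FNT t) \<and> val t \<in> fst P)
   \<or> (\<exists>psi theta. sentence (FAnd psi theta) \<and> n = code (FAnd psi theta) \<and>
        ((code psi \<in> fst P \<and> code theta \<in> fst P) \<or> (code psi \<in> fst T \<and> code theta \<in> fst P)
         \<or> (code theta \<in> fst T \<and> code psi \<in> fst P)))
   \<or> (\<exists>psi theta. sentence (FOr psi theta) \<and> n = code (FOr psi theta) \<and>
        ((code psi \<in> fst P \<and> code theta \<in> fst P) \<or> (code psi \<in> snd T \<and> code theta \<in> fst P)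
         \<or> (code theta \<in> snd T \<and> code psi \<in> fst P)))
   \<or> (\<exists>psi. sentence (FAll psi) \<and> n = code (FAll psi) \<and>
        (\<exists>y. code (inst psi (num y)) \<in> fst P) \<and>
        (\<forall>y. code (inst psi (num y)) \<in> fst P \<or> code (inst psi (num y)) \<in> fst T))
   \<or> (\<exists>psi. sentence (FEx psi) \<and> n = code (FEx psi) \<and>
        (\<exists>y. code (inst psi (num y)) \<in> fst P) \<and>
        (\<forall>y. code (inst psi (num y)) \<in> fst P \<or> code (inst psi (num y)) \<in> snd T))"

section \<open>The modified sequence (T*_alpha, P*_alpha)\<close>

type_synonym stg = "pred \<times> pred"

definition P0minus :: "nat set" where
  "P0minus = {code (FP (quote phi)) | phi. True}"

definition GammaStar :: "stg \<Rightarrow> stg" where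
  "GammaStar s = (let T = fst s; P = snd s in
     (({code phi | phi. sentence phi \<and> sk T P phi},
       {code phi | phi. sentence phi \<and> sk T P (neg phi)}),
      ({code phi | phi. sentence phi \<and> Pscr T P (code phi)},
       {code phi | phi. sentence phi \<and> sk T P (FOr phi (neg phi))} \<union> P0minus)))"

definition stage0 :: stg where
  "stage0 = (({}, {}), ({}, P0minus))"

definition UnionStg :: "stg set \<Rightarrow> stg" where
  "UnionStg S = (((\<Union>s\<in>S. fst (fst s)), (\<Union>s\<in>S. snd (fst s))),
                 ((\<Union>s\<in>S. fst (snd s)), (\<Union>s\<in>S. snd (snd s))))"

definition is_pred_of :: "'a::wellorder \<Rightarrow> 'a \<Rightarrow> bool" where
  "is_pred_of b a \<longleftrightarrow> b < a \<and> \<not> (\<exists>c. b < c \<and> c < a)"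

text \<open>An ordinal alpha is represented by an element of a well-ordered type (alpha corresponds to
  the order type of its set of predecessors); the recursion distinguishes zero, successors and limits.\<close>
definition stageStep :: "('a::wellorder \<Rightarrow> stg) \<Rightarrow> 'a \<Rightarrow> stg" where
  "stageStep f a =
     (if \<forall>b. \<not> b < a then stage0
      else if \<exists>b. is_pred_of b a then GammaStar (f (THE b. is_pred_of b a))
      else UnionStg (f ` {b. b < a}))"

definition stage :: "'a::wellorder \<Rightarrow> stg" where
  "stage = wfrec {(b, a). b < a} stageStep"

end

theory Submission
  imports Defs
begin

text \<open>
  Clauses (2)--(7) of \<open>\<P>\<close> concern codes of \<open>T\<close>-literals and of compound sentences, so for
  \<open>P t\<close> and \<open>\<not>P t\<close> only clause (1) can apply, at every stage alike: \<open>\<P>(P t)\<close> would need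
  \<open>P t\<close> or \<open>\<not>P t\<close> to be base paradoxical. A derivation in PA[SK] is also a classical one, so a
  base paradoxical sentence \<open>\<phi>\<close> is equivalent to \<open>\<not>T\<ulcorner>\<phi>\<urcorner>\<close> in every classical model in which
  \<open>T\<close> and \<open>P\<close> are interpreted by arbitrary sets. Interpreting \<open>T\<close> by the empty set and \<open>P\<close> by the
  empty set (resp. by all numbers) makes \<open>\<not>T\<ulcorner>\<phi>\<urcorner>\<close> true and \<open>P t\<close> (resp. \<open>\<not>P t\<close>) false.
\<close>

fun eval_tm :: "(nat \<Rightarrow> nat) \<Rightarrow> (nat \<Rightarrow> nat) \<Rightarrow> tm \<Rightarrow> nat" where
  "eval_tm e b (TVar i) = b i"
| "eval_tm e b (TPar a) = e a"
| "eval_tm e b TZero = 0"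
| "eval_tm e b (TSuc t) = Suc (eval_tm e b t)"
| "eval_tm e b (TPlus t u) = eval_tm e b t + eval_tm e b u"
| "eval_tm e b (TTimes t u) = eval_tm e b t * eval_tm e b u"

definition env_cons :: "nat \<Rightarrow> (nat \<Rightarrow> nat) \<Rightarrow> nat \<Rightarrow> nat" where
  "env_cons n b = (\<lambda>i. case i of 0 \<Rightarrow> n | Suc j \<Rightarrow> b j)"

definition env_insert :: "nat \<Rightarrow> nat \<Rightarrow> (nat \<Rightarrow> nat) \<Rightarrow> nat \<Rightarrow> nat" where
  "env_insert k v b = (\<lambda>i. if i < k then b i else if i = k then v else b (i - 1))"

text \<open>Classical satisfaction in \<open>\<nat>\<close> with \<open>T\<close> and \<open>P\<close> interpreted by the sets \<open>TS\<close> and \<open>PS\<close>;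
  \<open>e\<close> assigns the parameters and \<open>b\<close> the de Bruijn variables.\<close>

fun holds :: "nat set \<Rightarrow> nat set \<Rightarrow> (nat \<Rightarrow> nat) \<Rightarrow> (nat \<Rightarrow> nat) \<Rightarrow> fm \<Rightarrow> bool" where
  "holds TS PS e b (FEq s t) = (eval_tm e b s = eval_tm e b t)"
| "holds TS PS e b (FNeq s t) = (eval_tm e b s \<noteq> eval_tm e b t)"
| "holds TS PS e b (FT t) = (eval_tm e b t \<in> TS)"
| "holds TS PS e b (FNT t) = (eval_tm e b t \<notin> TS)"
| "holds TS PS e b (FP t) = (eval_tm e b t \<in> PS)"
| "holds TS PS e b (FNP t) = (eval_tm e b t \<notin> PS)"
| "holds TS PS e b (FAnd x y) = (holds TS PS e b x \<and> holds TS PS e b y)"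
| "holds TS PS e b (FOr x y) = (holds TS PS e b x \<or> holds TS PS e b y)"
| "holds TS PS e b (FAll x) = (\<forall>n. holds TS PS e (env_cons n b) x)"
| "holds TS PS e b (FEx x) = (\<exists>n. holds TS PS e (env_cons n b) x)"

lemma holds_neg [simp]: "holds TS PS e b (neg phi) \<longleftrightarrow> \<not> holds TS PS e b phi"
  by (induction phi arbitrary: b) auto

lemma eval_tm_num [simp]: "eval_tm e b (num n) = n"
  by (induction n) auto

lemma eval_tm_liftt [simp]: "eval_tm e (env_cons n b) (liftt s) = eval_tm e b s"
  by (induction s) (auto simp: env_cons_def)

lemma env_cons_insert: "env_cons n (env_insert k v b) = env_insert (Suc k) v (env_cons n b)"
  by (rule ext) (auto simp: env_cons_def env_insert_def split: nat.splits)

lemma env_insert_0: "env_insert 0 v b = env_cons v b"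
  by (rule ext) (auto simp: env_cons_def env_insert_def split: nat.splits)

lemma eval_tm_substt: "eval_tm e b (substt k s t) = eval_tm e (env_insert k (eval_tm e b s) b) t"
  by (induction t) (auto simp: env_insert_def)

lemma holds_substf:
  "holds TS PS e b (substf k s phi) = holds TS PS e (env_insert k (eval_tm e b s) b) phi"
  by (induction phi arbitrary: k s b) (auto simp: eval_tm_substt env_cons_insert)

lemma holds_inst: "holds TS PS e b (inst phi s) = holds TS PS e (env_cons (eval_tm e b s) b) phi"
  by (simp add: inst_def holds_substf env_insert_0)

lemma eval_tm_fresh_param: "a \<notin> paramst t \<Longrightarrow> eval_tm (e(a := n)) b t = eval_tm e b t"
  by (induction t) auto

lemma holds_fresh_param: "a \<notin> paramsf phi \<Longrightarrow> holds TS PS (e(a := n)) b phi = holds TS PS e b phi"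
  by (induction phi arbitrary: b) (auto simp: eval_tm_fresh_param)

lemma holds_fresh_params:
  "a \<notin> paramsl G \<Longrightarrow> g \<in> set G \<Longrightarrow> holds TS PS (e(a := n)) b g = holds TS PS e b g"
  by (auto simp: paramsl_def holds_fresh_param)

lemma holds_inst_fresh_param:
  "a \<notin> paramsf phi \<Longrightarrow>
     holds TS PS (e(a := n)) b (inst phi (TPar a)) = holds TS PS e (env_cons n b) phi"
  by (simp add: holds_inst holds_fresh_param)

text \<open>In each eigenvariable case the fresh parameter \<open>a\<close> is reassigned to the witness \<open>n\<close>;
  freshness keeps the side formulas unchanged.\<close>

theorem prv_sound:
  "prv G D \<Longrightarrow> \<forall>g\<in>set G. holds TS PS e b g \<Longrightarrow> \<exists>d\<in>set D. holds TS PS e b d"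
proof (induction G D arbitrary: e b rule: prv.induct)
  case (AllR G D phi a)
  show ?case
  proof (rule ccontr)
    assume none: "\<not> (\<exists>d\<in>set (D @ [FAll phi]). holds TS PS e b d)"
    then obtain n where n: "\<not> holds TS PS e (env_cons n b) phi" by auto
    have "\<forall>g\<in>set G. holds TS PS (e(a := n)) b g"
      using AllR.prems AllR.hyps(2) holds_fresh_params by blast
    with AllR.IH have "\<exists>d\<in>set (D @ [inst phi (TPar a)]). holds TS PS (e(a := n)) b d" by blast
    then show False
      using none n AllR.hyps(2) holds_fresh_params holds_inst_fresh_param by fastforce
  qed
next
  case (ExL phi a G D)
  then obtain n where "holds TS PS e (env_cons n b) phi" by auto
  then have "\<forall>g\<in>set (inst phi (TPar a) # G). holds TS PS (e(a := n)) b g"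
    using ExL.prems ExL.hyps(2) holds_fresh_params holds_inst_fresh_param by auto
  with ExL.IH have "\<exists>d\<in>set D. holds TS PS (e(a := n)) b d" by blast
  then show ?case using ExL.hyps(2) holds_fresh_params by fastforce
next
  case (Ind phi a G D t)
  show ?case
  proof (rule ccontr)
    assume none: "\<not> (\<exists>d\<in>set (D @ [inst phi t]). holds TS PS e b d)"
    have "holds TS PS e (env_cons m b) phi" for m
    proof (induction m)
      case 0
      then show ?case using Ind.prems by (simp add: holds_inst)
    next
      case (Suc m)
      have "\<forall>g\<in>set (inst phi (TPar a) # G). holds TS PS (e(a := m)) b g"
        using Suc Ind.prems Ind.hyps(2) holds_fresh_params holds_inst_fresh_param by auto
      with Ind.IH have "\<exists>d\<in>set (D @ [inst phi (TSuc (TPar a))]). holds TS PS (e(a := m)) b d"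
        by blast
      then show ?case
        using none Ind.hyps(2) holds_fresh_params by (fastforce simp: holds_inst holds_fresh_param)
    qed
    then show False using none by (auto simp: holds_inst)
  qed
next
  case (Cut G D phi)
  then show ?case by (cases "holds TS PS e b phi") auto
next
  case (Weak G D G' D')
  then show ?case by blast
next
  case (Repl G D phi t s)
  then show ?case by (cases "eval_tm e b s = eval_tm e b t") (auto simp: holds_inst)
qed (auto simp: holds_inst)

lemma base_paradoxical_holds_iff:
  assumes "base_paradoxical phi"
  shows "holds TS PS e b phi \<longleftrightarrow> code phi \<notin> TS"
  using prv_sound[of "[phi]" "[FNT (quote phi)]" TS PS e b]
    prv_sound[of "[FNT (quote phi)]" "[phi]" TS PS e b] assms
  by (auto simp: base_paradoxical_def quote_def)

lemma not_base_paradoxical_FP: "\<not> base_paradoxical (FP t)"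
  using base_paradoxical_holds_iff[of "FP t" "{}" "{}" "\<lambda>_. 0" "\<lambda>_. 0"] by auto

lemma not_base_paradoxical_FNP: "\<not> base_paradoxical (FNP t)"
  using base_paradoxical_holds_iff[of "FNP t" "{}" UNIV "\<lambda>_. 0" "\<lambda>_. 0"] by auto

lemma dneg_code: "dneg (code phi) = code (neg phi)"
  by (auto simp: dneg_def code_def)

lemma Pi_code_iff: "Pi (code phi) \<longleftrightarrow> base_paradoxical phi \<or> base_paradoxical (neg phi)"
  unfolding Pi_def Bset_def dneg_code by (auto simp: code_def)

lemma Pscr_FP_iff: "Pscr T P (code (FP t)) \<longleftrightarrow> sentence (FP t) \<and> Pi (code (FP t))"
  by (auto simp: Pscr_def code_def)

lemma Pscr_FNP_iff: "Pscr T P (code (FNP t)) \<longleftrightarrow> sentence (FNP t) \<and> Pi (code (FNP t))"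
  by (auto simp: Pscr_def code_def)

theorem mainTheorem12:
  fixes alpha :: "'a::wellorder" and t :: tm
  assumes "closed_tm t"
  shows "\<not> (Pscr (fst (stage alpha)) (snd (stage alpha)) (code (FP t))
           \<or> Pscr (fst (stage alpha)) (snd (stage alpha)) (code (FNP t)))"
proof -
  have "\<not> Pi (code (FP t))" "\<not> Pi (code (FNP t))"
    using not_base_paradoxical_FP not_base_paradoxical_FNP by (simp_all add: Pi_code_iff)
  then show ?thesis by (simp add: Pscr_FP_iff Pscr_FNP_iff)
qed

end
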